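(* Let $n\ge 5$ and let $C_n$ be the cycle with $n$ vertices. Then $C_n$ is not a $3$-threshold graph: there are no real numbers $\theta_1<\theta_2<\theta_3$ and map $r:V(C_n)\to\mathbb{R}$ such that for all distinct vertices $u,v$, $uv$ is an edge if and only if $r(u)+r(v)\in[\theta_1,\theta_2)\cup[\theta_3,\infty)$.
   Context: All graphs are finite and simple. $C_n$ denotes the cycle with $n$ vertices. *)

theory Defs
  imports Complex_Main
begin

definition cycle_adj :: "nat \<Rightarrow> nat \<Rightarrow> nat \<Rightarrow> bool" where
  "cycle_adj n u v \<longleftrightarrow> u < n \<and> v < n \<and> u \<noteq> v \<and> (v = (u + 1) mod n \<or> u = (v + 1) mod n)"

definition three_threshold :: "'a set \<Rightarrow> ('a \<Rightarrow> 'a \<Rightarrow> bool) \<Rightarrow> bool" where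
  "three_threshold V E \<longleftrightarrow>
     (\<exists>(t1::real) t2 t3 (r::'a \<Rightarrow> real). t1 < t2 \<and> t2 < t3 \<and>
        (\<forall>u\<in>V. \<forall>v\<in>V. u \<noteq> v \<longrightarrow>
           (E u v \<longleftrightarrow> (t1 \<le> r u + r v \<and> r u + r v < t2) \<or> t3 \<le> r u + r v)))"

end

theory Submission imports Defs begin

text \<open>Rotate the cycle so that vertex 0 carries the minimum rank v0. Since the edge
sum v0 + vm of 0 and its neighbour vm is at least t1, every pair sum compared below
is at least t1: a non-edge then lies in [t2, t3), an edge in [t1, t2) or in
[t3, \<infinity>). Playing non-edges against edges through the ranks shows that one of the
two edges at distance one from vertex 0 lies in the high band [t3, \<infinity>), and a
chain of such comparisons along the path 0, 1, 2, 3, 4 shows that a high edge there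
is impossible. For n \<ge> 5 all vertices and pairs involved are distinct; the two
sides of vertex 0 are mirror images.\<close>

definition in_threshold_band :: "real \<Rightarrow> real \<Rightarrow> real \<Rightarrow> real \<Rightarrow> bool" where
  "in_threshold_band t1 t2 t3 x \<longleftrightarrow> (t1 \<le> x \<and> x < t2) \<or> t3 \<le> x"

lemma high_edge_next_to_minimum_impossible:
  fixes t1 t2 t3 v0 v1 v2 v3 v4 vm :: real
  assumes t: "t1 < t2" "t2 < t3"
    and min: "v0 \<le> v1" "v0 \<le> v2" "v0 \<le> v3" "v0 \<le> v4" "v0 \<le> vm"
    and edge: "in_threshold_band t1 t2 t3 (v0 + v1)" "in_threshold_band t1 t2 t3 (v1 + v2)"
      "in_threshold_band t1 t2 t3 (v2 + v3)" "in_threshold_band t1 t2 t3 (v3 + v4)"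
      "in_threshold_band t1 t2 t3 (v0 + vm)"
    and non_edge: "\<not> in_threshold_band t1 t2 t3 (v0 + v2)" "\<not> in_threshold_band t1 t2 t3 (v0 + v3)"
      "\<not> in_threshold_band t1 t2 t3 (v1 + v3)" "\<not> in_threshold_band t1 t2 t3 (v1 + v4)"
      "\<not> in_threshold_band t1 t2 t3 (v1 + vm)" "\<not> in_threshold_band t1 t2 t3 (v2 + v4)"
      "\<not> in_threshold_band t1 t2 t3 (v2 + vm)"
    and high: "t3 \<le> v1 + v2"
  shows False
proof -
  note band = in_threshold_band_def
  have vm_low: "t1 \<le> v0 + vm" using edge(5) t unfolding band by auto
  have "v1 + vm < t3" using non_edge(5) t unfolding band by auto
  with vm_low high have "t2 \<le> v0 + v2" using non_edge(1) unfolding band by auto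
  then have "t3 \<le> v2 + v3" using min edge(3) unfolding band by auto
  moreover have "v2 + vm < t3" using non_edge(7) t unfolding band by auto
  ultimately have "t2 \<le> v0 + v3" using vm_low non_edge(2) unfolding band by auto
  have v13: "v1 + v3 < t3" using non_edge(3) t unfolding band by auto
  then have "v0 + v1 < t2" using min edge(1) unfolding band by auto
  have "v2 + v4 < t3" using non_edge(6) t unfolding band by auto
  with high v13 have "v3 + v4 < t2" using edge(4) unfolding band by auto
  have "t2 \<le> v1 + v4" using edge(1) min t non_edge(4) unfolding band by auto
  show False
    using \<open>t2 \<le> v0 + v3\<close> \<open>v0 + v1 < t2\<close> \<open>v3 + v4 < t2\<close> \<open>t2 \<le> v1 + v4\<close> by linarith
qed

lemma high_edge_next_to_minimum:
  fixes t1 t2 t3 v0 v1 v2 vm vm2 :: real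
  assumes t: "t1 < t2" "t2 < t3"
    and min: "v0 \<le> v1" "v0 \<le> v2" "v0 \<le> vm" "v0 \<le> vm2"
    and edge: "in_threshold_band t1 t2 t3 (v0 + v1)" "in_threshold_band t1 t2 t3 (v1 + v2)"
      "in_threshold_band t1 t2 t3 (v0 + vm)" "in_threshold_band t1 t2 t3 (vm + vm2)"
    and non_edge: "\<not> in_threshold_band t1 t2 t3 (v2 + vm)" "\<not> in_threshold_band t1 t2 t3 (v1 + vm2)"
  shows "t3 \<le> v1 + v2 \<or> t3 \<le> vm + vm2"
proof (rule ccontr)
  note band = in_threshold_band_def
  assume "\<not> ?thesis"
  then have "v1 + v2 < t2" "vm + vm2 < t2" using edge(2,4) unfolding band by auto
  moreover have "t2 \<le> v2 + vm" using edge(3) min t non_edge(1) unfolding band by auto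
  moreover have "t2 \<le> v1 + vm2" using edge(1) min t non_edge(2) unfolding band by auto
  ultimately show False by linarith
qed

lemma cycle_adj_iff:
  assumes "a < n" "b < n" "n \<ge> 3"
  shows "cycle_adj n a b \<longleftrightarrow>
    a \<noteq> b \<and> (b = a + 1 \<or> a = b + 1 \<or> (a = n - 1 \<and> b = 0) \<or> (b = n - 1 \<and> a = 0))"
proof -
  have "(x + 1) mod n = (if x + 1 = n then 0 else x + 1)" if "x < n" for x
    using that by (auto simp: mod_if)
  then show ?thesis unfolding cycle_adj_def using assms by auto
qed

lemma cycle_adj_rotate:
  assumes "a < n" "b < n"
  shows "cycle_adj n ((y + a) mod n) ((y + b) mod n) \<longleftrightarrow> cycle_adj n a b"
proof -
  have shift_eq: "(y + b) mod n = (y + c) mod n \<longleftrightarrow> b mod n = c mod n" for b c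
    by (simp add: nat_mod_eq_iff)
  have shift_Suc: "((y + a) mod n + 1) mod n = (y + (a + 1)) mod n" for a
    by (simp add: mod_Suc_eq)
  have "((y + b) mod n = ((y + a) mod n + 1) mod n) \<longleftrightarrow> b = (a + 1) mod n"
    if "b < n" for a b
    unfolding shift_Suc shift_eq using that by simp
  then show ?thesis unfolding cycle_adj_def using assms shift_eq[of a b] by auto
qed

lemma three_threshold_cycle_minimum_at_0:
  assumes "three_threshold {0..<n} (cycle_adj n)" "n > 0"
  obtains t1 t2 t3 and q :: "nat \<Rightarrow> real"
  where "t1 < t2" "t2 < t3" "\<And>a. q 0 \<le> q a"
    "\<And>a b. a < n \<Longrightarrow> b < n \<Longrightarrow> a \<noteq> b \<Longrightarrow>
       cycle_adj n a b \<longleftrightarrow> in_threshold_band t1 t2 t3 (q a + q b)"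
proof -
  obtain t1 t2 t3 :: real and r :: "nat \<Rightarrow> real" where t: "t1 < t2" "t2 < t3" and
    rep: "\<forall>u\<in>{0..<n}. \<forall>v\<in>{0..<n}. u \<noteq> v \<longrightarrow>
           (cycle_adj n u v \<longleftrightarrow> in_threshold_band t1 t2 t3 (r u + r v))"
    using assms(1) unfolding three_threshold_def in_threshold_band_def by blast
  obtain y where y: "y < n" "\<And>w. w < n \<Longrightarrow> r y \<le> r w"
    using Min_in[of "r ` {0..<n}"] Min_le[of "r ` {0..<n}"] assms(2) by fastforce
  define q where "q a = r ((y + a) mod n)" for a
  have "q 0 \<le> q a" for a unfolding q_def using y assms(2) by simp
  moreover have "cycle_adj n a b \<longleftrightarrow> in_threshold_band t1 t2 t3 (q a + q b)"
    if "a < n" "b < n" "a \<noteq> b" for a b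
  proof -
    have "(y + a) mod n = (y + b) mod n \<longleftrightarrow> a mod n = b mod n"
      by (simp add: nat_mod_eq_iff)
    then have "(y + a) mod n \<noteq> (y + b) mod n" using that by simp
    then show ?thesis
      using rep cycle_adj_rotate[OF that(1,2), of y] assms(2) unfolding q_def by auto
  qed
  ultimately show thesis using that t by blast
qed

lemma cycle_no_band_representation_minimum_at_0:
  assumes n: "n \<ge> 5" and t: "t1 < t2" "t2 < t3" and min: "\<And>a. q 0 \<le> q a"
    and rep: "\<And>a b. a < n \<Longrightarrow> b < n \<Longrightarrow> a \<noteq> b \<Longrightarrow>
       cycle_adj n a b \<longleftrightarrow> in_threshold_band t1 t2 t3 (q a + q b)"
  shows False
proof -
  have edge: "in_threshold_band t1 t2 t3 (q a + q b)" if "a < n" "b < n" "a \<noteq> b"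
    "b = a + 1 \<or> a = b + 1 \<or> (a = n - 1 \<and> b = 0) \<or> (b = n - 1 \<and> a = 0)" for a b
    using rep[OF that(1-3)] cycle_adj_iff[of a n b] that n by auto
  have non_edge: "\<not> in_threshold_band t1 t2 t3 (q a + q b)" if "a < n" "b < n" "a \<noteq> b"
    "\<not> (b = a + 1 \<or> a = b + 1 \<or> (a = n - 1 \<and> b = 0) \<or> (b = n - 1 \<and> a = 0))" for a b
    using rep[OF that(1-3)] cycle_adj_iff[of a n b] that n by auto
  have "t3 \<le> q 1 + q 2 \<or> t3 \<le> q (n - 1) + q (n - 2)"
    by (rule high_edge_next_to_minimum[OF t min min min min];
        (rule edge | rule non_edge); use n in arith)
  then show False
  proof
    assume high: "t3 \<le> q 1 + q 2"
    show False
      by (rule high_edge_next_to_minimum_impossible[of _ _ _ "q 0" _ _ "q 3" "q 4" "q (n - 1)",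
            OF t min min min min min _ _ _ _ _ _ _ _ _ _ _ _ high];
          (rule edge | rule non_edge); use n in arith)
  next
    assume high: "t3 \<le> q (n - 1) + q (n - 2)"
    show False
      by (rule high_edge_next_to_minimum_impossible[of _ _ _ "q 0" _ _ "q (n - 3)" "q (n - 4)" "q 1",
            OF t min min min min min _ _ _ _ _ _ _ _ _ _ _ _ high];
          (rule edge | rule non_edge); use n in arith)
  qed
qed

theorem mainTheorem5:
  fixes n :: nat
  assumes "n \<ge> 5"
  shows "\<not> three_threshold {0..<n} (cycle_adj n)"
proof
  assume "three_threshold {0..<n} (cycle_adj n)"
  then obtain t1 t2 t3 q where "t1 < t2" "t2 < t3" "\<And>a. q 0 \<le> q a"
    "\<And>a b. a < n \<Longrightarrow> b < n \<Longrightarrow> a \<noteq> b \<Longrightarrow>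
       cycle_adj n a b \<longleftrightarrow> in_threshold_band t1 t2 t3 (q a + q b)"
    using three_threshold_cycle_minimum_at_0[of n] assms by (metis gr0I not_numeral_le_zero)
  then show False using cycle_no_band_representation_minimum_at_0 assms by blast
qed

end
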